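(* Let $n=2$, and let $L\in K[D_1,D_2]$ have order $d$ and symbol $\operatorname{Sym}_L=S_1\cdots S_k$, where $S_1,\dots,S_k\in K[X_1,X_2]$ are pairwise coprime homogeneous polynomials. Then the ring of obstacles $K[X_1,X_2]/I$, where $I=(\operatorname{Sym}_L/S_1,\dots,\operatorname{Sym}_L/S_k)$, is zero in degree $d-1$: every homogeneous polynomial of degree $d-1$ lies in $I$. Consequently every common obstacle to factorization of $L$ of type $(S_1)\cdots(S_k)$ has order at most $d-2$.
   Context: $K$ is a field with commuting derivations $\partial_1,\partial_2$, and $K[D_1,D_2]$ is the ring of linear differential operators over $K$: $D_1D_2=D_2D_1$ and $D_i\circ a=aD_i+\partial_i(a)$ for $a\in K$. Every $L$ is uniquely $\sum a_{ij}D_1^iD_2^j$ with $a_{ij}\in K$. The order $\operatorname{ord}(L)$ is the largest $i+j$ with $a_{ij}\neq0$, and $\operatorname{ord}(0)=-\infty$. The symbol $\operatorname{Sym}_L=\sum_{i+j=\operatorname{ord}L}a_{ij}X_1^iX_2^j$. A factorization of type $(S_1)\cdots(S_k)$ of an operator $M$ is $M=F_1\circ\cdots\circ F_k$ with $\operatorname{Sym}_{F_i}=S_i$. A common obstacle to factorization of $L$ of that type is an operator $R$ such that $L-R$ has such a factorization and $R$ has minimal possible order among such operators. *)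

theory Defs
  imports "HOL-Computational_Algebra.Polynomial" "HOL-Library.Extended_Real"
begin

text \<open>The base field K is a type 'a :: field with two maps d1 d2 that are
 commuting derivations.\<close>

definition is_derivation :: "('a::field \<Rightarrow> 'a) \<Rightarrow> bool" where
  "is_derivation d \<longleftrightarrow> (\<forall>a b. d (a + b) = d a + d b \<and> d (a * b) = a * d b + d a * b)"

text \<open>A differential operator sum a_ij D1^i D2^j is represented by its
 coefficient function (i,j) to a_ij, required to have finite support.\<close>

type_synonym 'a diffop = "nat \<times> nat \<Rightarrow> 'a"

definition op_supp :: "'a::zero diffop \<Rightarrow> (nat \<times> nat) set" where
  "op_supp L = {ij. L ij \<noteq> 0}"

definition op_valid :: "'a::zero diffop \<Rightarrow> bool" where
  "op_valid L \<longleftrightarrow> finite (op_supp L)"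

definition op_one :: "'a::{zero,one} diffop" where
  "op_one = (\<lambda>ij. if ij = (0, 0) then 1 else 0)"

text \<open>Composition in K[D1,D2]: from D_i a = a D_i + d_i(a) and D1 D2 = D2 D1 one gets
 (a D1^i D2^j) (b D1^k D2^l) = sum_{p<=i, q<=j} C(i,p) C(j,q) a d1^p d2^q(b) D1^(i-p+k) D2^(j-q+l).\<close>

definition op_comp :: "('a::field \<Rightarrow> 'a) \<Rightarrow> ('a \<Rightarrow> 'a) \<Rightarrow> 'a diffop \<Rightarrow> 'a diffop \<Rightarrow> 'a diffop" where
  "op_comp d1 d2 L M = (\<lambda>(m, n).
     \<Sum>(i, j)\<in>op_supp L. \<Sum>p\<le>i. \<Sum>q\<le>j.
       (if i - p \<le> m \<and> j - q \<le> n then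
          of_nat (i choose p) * of_nat (j choose q) * L (i, j)
            * (d1 ^^ p) ((d2 ^^ q) (M (m - (i - p), n - (j - q))))
        else 0))"

definition op_comp_list :: "('a::field \<Rightarrow> 'a) \<Rightarrow> ('a \<Rightarrow> 'a) \<Rightarrow> 'a diffop list \<Rightarrow> 'a diffop" where
  "op_comp_list d1 d2 Fs = foldr (op_comp d1 d2) Fs op_one"

definition op_ord :: "'a::zero diffop \<Rightarrow> ereal" where
  "op_ord L = (if op_supp L = {} then -\<infinity>
               else ereal (real (Max ((\<lambda>(i, j). i + j) ` op_supp L))))"

text \<open>Polynomials in K[X1,X2] are represented as 'a poly poly: the coefficient of
 X1^i X2^j in P is coeff (coeff P j) i.\<close>

definition biv_coeff :: "'a::zero poly poly \<Rightarrow> nat \<Rightarrow> nat \<Rightarrow> 'a" where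
  "biv_coeff P i j = coeff (coeff P j) i"

definition biv_monom :: "'a::zero \<Rightarrow> nat \<Rightarrow> nat \<Rightarrow> 'a poly poly" where
  "biv_monom a i j = monom (monom a i) j"

definition homogeneous :: "'a::zero poly poly \<Rightarrow> nat \<Rightarrow> bool" where
  "homogeneous P m \<longleftrightarrow> (\<forall>i j. biv_coeff P i j \<noteq> 0 \<longrightarrow> i + j = m)"

definition op_sym :: "'a::comm_ring_1 diffop \<Rightarrow> 'a poly poly" where
  "op_sym L = (if op_supp L = {} then 0
     else (let D = Max ((\<lambda>(i, j). i + j) ` op_supp L) in
       \<Sum>(i, j)\<in>{(i, j). (i, j) \<in> op_supp L \<and> i + j = D}. biv_monom (L (i, j)) i j))"

definition has_factorization ::
  "('a::field \<Rightarrow> 'a) \<Rightarrow> ('a \<Rightarrow> 'a) \<Rightarrow> 'a diffop \<Rightarrow> 'a poly poly list \<Rightarrow> bool" where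
  "has_factorization d1 d2 M Ss \<longleftrightarrow>
     (\<exists>Fs. length Fs = length Ss \<and> (\<forall>F\<in>set Fs. op_valid F)
        \<and> (\<forall>i<length Ss. op_sym (Fs ! i) = Ss ! i)
        \<and> op_comp_list d1 d2 Fs = M)"

definition common_obstacle ::
  "('a::field \<Rightarrow> 'a) \<Rightarrow> ('a \<Rightarrow> 'a) \<Rightarrow> 'a diffop \<Rightarrow> 'a poly poly list \<Rightarrow> 'a diffop \<Rightarrow> bool" where
  "common_obstacle d1 d2 L Ss R \<longleftrightarrow>
     op_valid R \<and> has_factorization d1 d2 (L - R) Ss \<and>
     (\<forall>R'. op_valid R' \<and> has_factorization d1 d2 (L - R') Ss \<longrightarrow> op_ord R \<le> op_ord R')"

definition gen_ideal :: "'a::comm_ring_1 list \<Rightarrow> 'a set" where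
  "gen_ideal gs = {x. \<exists>c. x = (\<Sum>i<length gs. c i * gs ! i)}"

end

theory Submission
  imports Defs "HOL-Library.Function_Algebras"
begin

text \<open>Write \<open>Sym\<^sub>L = S\<^sub>1 \<cdots> S\<^sub>k\<close> with \<open>S\<^sub>i\<close> of degree \<open>n\<^sub>i\<close>. Pairwise coprime binary forms have no
  common zero on the projective line; after setting \<open>X\<^sub>2 = 1\<close>, Bezout identities with degree
  bounds therefore show, by induction on \<open>k\<close>, that every form of degree \<open>d - 1\<close> equals
  \<open>\<Sum> c\<^sub>i \<Prod>\<^sub>j\<^sub>\<noteq>\<^sub>i S\<^sub>j\<close> with \<open>c\<^sub>i\<close> of degree \<open>n\<^sub>i - 1\<close>.

  On the operator side, the composite of the factors \<open>S\<^sub>i(D) + c\<^sub>i(D)\<close> has symbol \<open>Sym\<^sub>L\<close>, and its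
  part of order \<open>d - 1\<close> is that of the composite of the \<open>S\<^sub>i(D)\<close> plus \<open>\<Sum> c\<^sub>i \<Prod>\<^sub>j\<^sub>\<noteq>\<^sub>i S\<^sub>j\<close>: the
  terms created by commuting derivations past coefficients are the same in both composites.
  Choosing the \<open>c\<^sub>i\<close> to match the part of order \<open>d - 1\<close> of \<open>L\<close> leaves a remainder of order at
  most \<open>d - 2\<close>, which bounds the order of every common obstacle.\<close>

section \<open>Binary forms\<close>

lemma biv_poly_eqI: "(\<And>i j. biv_coeff P i j = biv_coeff Q i j) \<Longrightarrow> P = Q"
  unfolding biv_coeff_def by (intro poly_eqI) auto

lemma biv_coeff_0 [simp]: "biv_coeff 0 i j = 0"
  by (simp add: biv_coeff_def)

lemma biv_coeff_1: "biv_coeff 1 i j = (if i = 0 \<and> j = 0 then 1 else 0)"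
  by (simp add: biv_coeff_def coeff_1)

lemma biv_coeff_add [simp]: "biv_coeff (P + Q) i j = biv_coeff P i j + biv_coeff Q i j"
  by (simp add: biv_coeff_def)

lemma biv_coeff_diff [simp]:
  "biv_coeff (P - Q) i j = biv_coeff P i j - biv_coeff (Q :: 'a::comm_ring poly poly) i j"
  by (simp add: biv_coeff_def)

lemma biv_coeff_sum: "biv_coeff (\<Sum>x\<in>A. f x) i j = (\<Sum>x\<in>A. biv_coeff (f x) i j)"
  by (simp add: biv_coeff_def coeff_sum)

lemma biv_coeff_biv_monom [simp]:
  "biv_coeff (biv_monom a i j) i' j' = (if i = i' \<and> j = j' then a else 0)"
  by (simp add: biv_coeff_def biv_monom_def)

lemma biv_coeff_mult:
  "biv_coeff (P * Q) m n = (\<Sum>r\<le>m. \<Sum>l\<le>n. biv_coeff P r l * biv_coeff Q (m - r) (n - l))"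
proof -
  have "biv_coeff (P * Q) m n = (\<Sum>l\<le>n. \<Sum>r\<le>m. biv_coeff P r l * biv_coeff Q (m - r) (n - l))"
    by (simp add: biv_coeff_def coeff_mult coeff_sum)
  then show ?thesis
    by (simp add: sum.swap[of _ "{..n}"])
qed

lemma biv_poly_nonzero_coeff:
  assumes "P \<noteq> 0"
  obtains i j where "biv_coeff P i j \<noteq> 0"
  using assms biv_poly_eqI[of P 0] by auto

lemma homogeneous_iff: "homogeneous P m \<longleftrightarrow> (\<forall>i j. i + j \<noteq> m \<longrightarrow> biv_coeff P i j = 0)"
  unfolding homogeneous_def by blast

lemma homogeneous_0 [simp]: "homogeneous 0 m"
  by (simp add: homogeneous_def)

lemma homogeneous_1: "homogeneous 1 0"
  by (simp add: homogeneous_def biv_coeff_1)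

lemma homogeneous_diff:
  "homogeneous P m \<Longrightarrow> homogeneous Q m \<Longrightarrow> homogeneous (P - Q) m"
  for P Q :: "'a::comm_ring poly poly"
  by (auto simp: homogeneous_iff)

lemma homogeneous_mult:
  fixes P Q :: "'a::comm_semiring_1 poly poly"
  assumes "homogeneous P a" "homogeneous Q b"
  shows "homogeneous (P * Q) (a + b)"
  unfolding homogeneous_def
proof (intro allI impI)
  fix i j assume "biv_coeff (P * Q) i j \<noteq> 0"
  then obtain r l where "r \<le> i" "l \<le> j" "biv_coeff P r l * biv_coeff Q (i - r) (j - l) \<noteq> 0"
    unfolding biv_coeff_mult by (auto elim!: sum.not_neutral_contains_not_neutral)
  then have "biv_coeff P r l \<noteq> 0" "biv_coeff Q (i - r) (j - l) \<noteq> 0" by auto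
  with assms have "r + l = a" "(i - r) + (j - l) = b"
    by (auto simp: homogeneous_def)
  with \<open>r \<le> i\<close> \<open>l \<le> j\<close> show "i + j = a + b" by arith
qed

lemma homogeneous_prod_list:
  "list_all2 homogeneous Ps ns \<Longrightarrow> homogeneous (prod_list Ps) (sum_list ns)"
  by (induction rule: list_all2_induct) (auto simp: homogeneous_1 homogeneous_mult)

lemma homogeneous_degree_unique:
  assumes "P \<noteq> 0" "homogeneous P a" "homogeneous P b"
  shows "a = b"
  using assms by (auto simp: homogeneous_def elim: biv_poly_nonzero_coeff)

text \<open>Homogeneity of degree \<open>n - 1\<close>, where a form of degree \<open>-1\<close> is zero (rather than
  truncating \<open>n - 1\<close> to \<open>0\<close>).\<close>

definition homogeneous_pred :: "'a::zero poly poly \<Rightarrow> nat \<Rightarrow> bool" where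
  "homogeneous_pred P n \<longleftrightarrow> (\<forall>i j. biv_coeff P i j \<noteq> 0 \<longrightarrow> Suc (i + j) = n)"

lemma homogeneous_pred_Suc [simp]: "homogeneous_pred P (Suc m) \<longleftrightarrow> homogeneous P m"
  by (simp add: homogeneous_pred_def homogeneous_def)

lemma homogeneous_pred_0 [simp]: "homogeneous_pred P 0 \<longleftrightarrow> P = 0"
  by (auto simp: homogeneous_pred_def intro: biv_poly_eqI)

lemma homogeneous_pred_zero [simp]: "homogeneous_pred 0 n"
  by (simp add: homogeneous_pred_def)

lemma homogeneous_pred_iff:
  "homogeneous_pred P n \<longleftrightarrow> (\<forall>i j. Suc (i + j) \<noteq> n \<longrightarrow> biv_coeff P i j = 0)"
  unfolding homogeneous_pred_def by blast

lemma homogeneous_pred_add: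
  "homogeneous_pred P n \<Longrightarrow> homogeneous_pred Q n \<Longrightarrow> homogeneous_pred (P + Q) n"
  by (auto simp: homogeneous_pred_iff)

lemma homogeneous_pred_mult:
  fixes P Q :: "'a::comm_semiring_1 poly poly"
  assumes "homogeneous_pred P a" "homogeneous_pred Q b" "a + b = Suc t"
  shows "homogeneous_pred (P * Q) t"
proof (cases "a = 0 \<or> b = 0")
  case True
  with assms show ?thesis by auto
next
  case False
  then obtain a' b' where "a = Suc a'" "b = Suc b'" by (auto simp: gr0_conv_Suc)
  with assms show ?thesis by (auto dest: homogeneous_mult)
qed

lemma homogeneous_pred_diff:
  "homogeneous_pred P n \<Longrightarrow> homogeneous_pred Q n \<Longrightarrow> homogeneous_pred (P - Q) n"
  for P Q :: "'a::comm_ring poly poly"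
  by (auto simp: homogeneous_pred_iff)

section \<open>Dehomogenization\<close>

definition dehomogenize :: "'a::comm_semiring_1 poly poly \<Rightarrow> 'a poly" where
  "dehomogenize P = poly P 1"

definition homogenize :: "nat \<Rightarrow> 'a::comm_monoid_add poly \<Rightarrow> 'a poly poly" where
  "homogenize m f = (\<Sum>i\<le>m. biv_monom (coeff f i) i (m - i))"

lemma dehomogenize_0 [simp]: "dehomogenize 0 = 0"
  and dehomogenize_1 [simp]: "dehomogenize 1 = 1"
  and dehomogenize_add [simp]: "dehomogenize (P + Q) = dehomogenize P + dehomogenize Q"
  and dehomogenize_mult [simp]: "dehomogenize (P * Q) = dehomogenize P * dehomogenize Q"
  by (simp_all add: dehomogenize_def)

lemma dehomogenize_diff [simp]:
  "dehomogenize (P - Q) = dehomogenize P - dehomogenize (Q :: 'a::comm_ring_1 poly poly)"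
  by (simp add: dehomogenize_def)

lemma coeff_dehomogenize:
  fixes P :: "'a::comm_semiring_1 poly poly"
  assumes "homogeneous P m"
  shows "coeff (dehomogenize P) i = (if i \<le> m then biv_coeff P i (m - i) else 0)"
proof -
  have "coeff (dehomogenize P) i = (\<Sum>j\<le>degree P. biv_coeff P i j)"
    by (simp add: dehomogenize_def poly_altdef coeff_sum biv_coeff_def)
  also have "\<dots> = (\<Sum>j\<le>degree P. if j = m - i \<and> i \<le> m then biv_coeff P i (m - i) else 0)"
    using assms by (intro sum.cong refl) (auto simp: homogeneous_iff)
  also have "\<dots> = (if i \<le> m then biv_coeff P i (m - i) else 0)"
    by (cases "m - i \<le> degree P") (auto simp: biv_coeff_def coeff_eq_0)
  finally show ?thesis .
qed

lemma degree_dehomogenize_le: "homogeneous P m \<Longrightarrow> degree (dehomogenize P) \<le> m"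
  by (rule degree_le) (simp add: coeff_dehomogenize)

lemma biv_coeff_homogenize:
  "biv_coeff (homogenize m f) i j = (if i + j = m then coeff f i else 0)"
proof -
  have "biv_coeff (homogenize m f) i j = (\<Sum>k\<le>m. if k = i then (if m - i = j then coeff f i else 0) else 0)"
    unfolding homogenize_def biv_coeff_sum by (intro sum.cong) auto
  then show ?thesis
    by (auto simp: sum.delta)
qed

lemma homogeneous_homogenize: "homogeneous (homogenize m f) m"
  by (simp add: homogeneous_def biv_coeff_homogenize)

lemma dehomogenize_homogenize:
  "degree (f :: 'a::comm_semiring_1 poly) \<le> m \<Longrightarrow> dehomogenize (homogenize m f) = f"
  by (rule poly_eqI)
    (auto simp: coeff_dehomogenize[OF homogeneous_homogenize] biv_coeff_homogenize coeff_eq_0)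

lemma homogenize_dehomogenize:
  "homogeneous (P :: 'a::comm_semiring_1 poly poly) m \<Longrightarrow> homogenize m (dehomogenize P) = P"
  by (rule biv_poly_eqI) (auto simp: biv_coeff_homogenize coeff_dehomogenize homogeneous_iff)

lemma dehomogenize_eq_0_iff:
  assumes "homogeneous (P :: 'a::comm_semiring_1 poly poly) m"
  shows "dehomogenize P = 0 \<longleftrightarrow> P = 0"
proof
  assume "dehomogenize P = 0"
  then show "P = 0"
    using homogenize_dehomogenize[OF assms] by (simp add: homogenize_def biv_monom_def)
qed simp

lemma degree_dehomogenize_eq:
  fixes S :: "'a::comm_semiring_1 poly poly"
  assumes hS: "homogeneous S a" and "poly S 0 \<noteq> 0"
  shows "degree (dehomogenize S) = a"
proof -
  have "coeff S 0 \<noteq> 0"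
    using assms(2) by (simp add: poly_0_coeff_0)
  then obtain i where i: "biv_coeff S i 0 \<noteq> 0"
    by (metis biv_coeff_def coeff_0 poly_eqI)
  moreover from i hS have "i = a"
    unfolding homogeneous_def by fastforce
  ultimately have "biv_coeff S a 0 \<noteq> 0"
    by simp
  then have "coeff (dehomogenize S) a \<noteq> 0"
    by (simp add: coeff_dehomogenize[OF hS])
  with degree_dehomogenize_le[OF hS] show ?thesis
    by (simp add: le_antisym le_degree)
qed

definition degree_less :: "'a::zero poly \<Rightarrow> nat \<Rightarrow> bool" where
  "degree_less f n \<longleftrightarrow> f = 0 \<or> degree f < n"

lemma degree_less_dehomogenize:
  assumes "homogeneous_pred P n"
  shows "degree_less (dehomogenize P) n"
proof (cases n)
  case (Suc m)
  with assms show ?thesis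
    using degree_dehomogenize_le[of P m] by (auto simp: degree_less_def)
qed (use assms in \<open>simp add: degree_less_def\<close>)

lemma obtain_homogeneous_pred_with_dehomogenize:
  fixes f :: "'a::comm_semiring_1 poly"
  assumes "degree_less f n"
  obtains F where "homogeneous_pred F n" "dehomogenize F = f"
proof (cases n)
  case 0
  with assms that show ?thesis by (simp add: degree_less_def)
next
  case (Suc m)
  with assms have "degree f \<le> m"
    by (auto simp: degree_less_def)
  with Suc that show ?thesis
    by (metis homogeneous_pred_Suc homogeneous_homogenize dehomogenize_homogenize)
qed

lemma homogeneous_pred_dehomogenize_eq_0:
  "homogeneous_pred (P :: 'a::comm_semiring_1 poly poly) n \<Longrightarrow> dehomogenize P = 0 \<Longrightarrow> P = 0"
  by (cases n) (auto simp: dehomogenize_eq_0_iff)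

section \<open>Forms without common zero\<close>

definition comaximal :: "'a::comm_ring_1 \<Rightarrow> 'a \<Rightarrow> bool" where
  "comaximal f g \<longleftrightarrow> (\<exists>x y. x * f + y * g = 1)"

lemma comaximal_commute: "comaximal f g \<longleftrightarrow> comaximal g f"
  unfolding comaximal_def by (metis add.commute)

lemma comaximal_mult_right:
  assumes "comaximal f g" "comaximal f h"
  shows "comaximal f (g * h)"
proof -
  obtain x y x' y' where e: "x * f + y * g = 1" and e': "x' * f + y' * h = 1"
    using assms unfolding comaximal_def by blast
  have "(x * x' * f + x * y' * h + y * g * x') * f + (y * y') * (g * h)
      = (x * f + y * g) * (x' * f + y' * h)"
    by (simp add: algebra_simps)
  also have "\<dots> = 1"
    by (simp add: e e')
  finally show ?thesis
    unfolding comaximal_def by blast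
qed

text \<open>The ideal \<open>(f, g)\<close> is generated by any of its nonzero elements of least degree.\<close>

lemma coprime_imp_comaximal:
  fixes f g :: "'a::field poly"
  assumes cop: "coprime f g" and "f \<noteq> 0"
  shows "comaximal f g"
proof -
  let ?I = "\<lambda>h. h \<noteq> 0 \<and> (\<exists>x y. h = x * f + y * g)"
  have "?I f"
    using \<open>f \<noteq> 0\<close> by (intro conjI exI[of _ 1] exI[of _ 0]) auto
  then obtain h where "?I h" and least: "\<And>h'. ?I h' \<Longrightarrow> degree h \<le> degree h'"
    using ex_has_least_nat[of ?I f degree] by blast
  then obtain x y where h: "h = x * f + y * g" and "h \<noteq> 0" by blast
  have h_dvd: "h dvd q" if q: "q = xq * f + yq * g" for q xq yq
  proof (rule ccontr)
    assume "\<not> h dvd q"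
    then have "q mod h \<noteq> 0" by auto
    moreover have "q mod h = (xq - q div h * x) * f + (yq - q div h * y) * g"
      by (simp add: minus_div_mult_eq_mod[symmetric] q h algebra_simps)
    ultimately have "degree h \<le> degree (q mod h)"
      using least by blast
    moreover have "degree (q mod h) < degree h"
      using degree_mod_less' \<open>h \<noteq> 0\<close> \<open>q mod h \<noteq> 0\<close> by blast
    ultimately show False by simp
  qed
  have "is_unit h"
    using coprime_common_divisor[OF cop h_dvd[of f 1 0] h_dvd[of g 0 1]] by simp
  then obtain k where "1 = h * k"
    by (rule dvdE)
  then have "(k * x) * f + (k * y) * g = 1"
    by (simp add: h algebra_simps)
  then show ?thesis
    unfolding comaximal_def by blast
qed

text \<open>Two forms without common zero on the projective line: none at \<open>X\<^sub>2 = 1\<close> (over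
  any extension field), and not both vanishing at \<open>X\<^sub>2 = 0\<close>.\<close>

definition no_common_zero :: "'a::comm_ring_1 poly poly \<Rightarrow> 'a poly poly \<Rightarrow> bool" where
  "no_common_zero S T \<longleftrightarrow>
     comaximal (dehomogenize S) (dehomogenize T) \<and> (poly S 0 \<noteq> 0 \<or> poly T 0 \<noteq> 0)"

lemma no_common_zero_prod_list_right:
  fixes S :: "'a::idom poly poly"
  assumes "\<And>T. T \<in> set Ts \<Longrightarrow> no_common_zero S T"
  shows "no_common_zero S (prod_list Ts)"
proof -
  have "comaximal (dehomogenize S) (dehomogenize (prod_list Ts))"
    using assms
  proof (induction Ts)
    case Nil
    show ?case
      unfolding comaximal_def by (rule exI[of _ 0], rule exI[of _ 1]) simp
  next
    case (Cons T Ts)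
    then show ?case
      by (simp add: no_common_zero_def comaximal_mult_right)
  qed
  moreover have "poly S 0 \<noteq> 0 \<or> poly (prod_list Ts) 0 \<noteq> 0"
    using assms by (induction Ts) (auto simp: no_common_zero_def)
  ultimately show ?thesis
    unfolding no_common_zero_def by blast
qed

lemma homogenize_dvd_of_dvd_dehomogenize:
  fixes S :: "'a::field poly poly"
  assumes hS: "homogeneous S a" and "S \<noteq> 0" and "h dvd dehomogenize S"
  shows "homogenize (degree h) h dvd S"
proof -
  obtain g where g: "dehomogenize S = h * g"
    using assms(3) by (auto elim: dvdE)
  have "dehomogenize S \<noteq> 0"
    using dehomogenize_eq_0_iff[OF hS] \<open>S \<noteq> 0\<close> by blast
  with g have "h \<noteq> 0" "g \<noteq> 0" by auto
  with g degree_dehomogenize_le[OF hS] have deg: "degree h + degree g \<le> a"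
    by (simp add: degree_mult_eq)
  define K where "K = homogenize (a - degree h) g"
  have "homogeneous (homogenize (degree h) h * K) a"
    using homogeneous_mult[OF homogeneous_homogenize homogeneous_homogenize, of "degree h" h "a - degree h" g] deg
    by (simp add: K_def)
  moreover have "dehomogenize (homogenize (degree h) h * K - S) = 0"
    using deg by (simp add: K_def dehomogenize_homogenize g)
  ultimately have "homogenize (degree h) h * K - S = 0"
    using dehomogenize_eq_0_iff homogeneous_diff[OF _ hS] by blast
  then show ?thesis by (auto intro: dvdI)
qed

lemma coprime_imp_no_common_zero:
  fixes A B :: "'a::field poly poly"
  assumes hA: "homogeneous A a" and hB: "homogeneous B b" and "A \<noteq> 0" "B \<noteq> 0"
    and cop: "coprime A B"
  shows "no_common_zero A B"
proof -
  have "coprime (dehomogenize A) (dehomogenize B)"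
  proof (rule coprimeI)
    fix h assume "h dvd dehomogenize A" "h dvd dehomogenize B"
    then have "is_unit (homogenize (degree h) h)"
      by (intro coprime_common_divisor[OF cop] homogenize_dvd_of_dvd_dehomogenize[OF hA \<open>A \<noteq> 0\<close>]
          homogenize_dvd_of_dvd_dehomogenize[OF hB \<open>B \<noteq> 0\<close>])
    then obtain K where "1 = homogenize (degree h) h * K"
      by (rule dvdE)
    then have "dehomogenize 1 = dehomogenize (homogenize (degree h) h * K)"
      by (rule arg_cong)
    then have "1 = h * dehomogenize K"
      by (simp add: dehomogenize_homogenize)
    then show "is_unit h" by (rule dvdI)
  qed
  moreover have "dehomogenize A \<noteq> 0"
    using dehomogenize_eq_0_iff[OF hA] \<open>A \<noteq> 0\<close> by blast
  moreover have "poly A 0 \<noteq> 0 \<or> poly B 0 \<noteq> 0"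
  proof (rule ccontr)
    assume "\<not> ?thesis"
    then have "[:0, 1:] dvd A" "([:0, 1:] :: 'a poly poly) dvd B"
      using dvd_iff_poly_eq_0[of "0 :: 'a poly"] by simp_all
    then have "is_unit ([:0, 1:] :: 'a poly poly)"
      by (rule coprime_common_divisor[OF cop])
    then obtain K where "1 = ([:0, 1:] :: 'a poly poly) * K"
      by (rule dvdE)
    then have "poly 1 0 = poly ([:0, 1:] * K) 0"
      by (rule arg_cong)
    then show False by simp
  qed
  ultimately show ?thesis
    unfolding no_common_zero_def by (blast intro: coprime_imp_comaximal)
qed

section \<open>The ideal of the cofactors\<close>

lemma degree_less_mult:
  "degree_less u b \<Longrightarrow> degree f \<le> a \<Longrightarrow> degree_less (u * f) (a + b)"
  for u f :: "'a::idom poly"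
  unfolding degree_less_def by (cases "f = 0"; cases "u = 0") (auto simp: degree_mult_eq)

lemma degree_less_diff:
  "degree_less u n \<Longrightarrow> degree_less w n \<Longrightarrow> degree_less (u - w) n"
  for u w :: "'a::comm_ring poly"
  unfolding degree_less_def
  by (cases "u = 0"; cases "w = 0") (auto intro: degree_diff_less)

lemma degree_less_mult_cancel:
  "degree_less (v * g) (a + degree g) \<Longrightarrow> g \<noteq> 0 \<Longrightarrow> degree_less v a"
  for v g :: "'a::idom poly"
  unfolding degree_less_def by (cases "v = 0") (auto simp: degree_mult_eq)

text \<open>Reduce the Bezout cofactor of \<open>f\<close> modulo \<open>g\<close>; the degree bound on the other
  cofactor then comes for free.\<close>

lemma comaximal_decomposition_exact_degree:
  fixes f g p :: "'a::field poly"
  assumes "comaximal f g" and "g \<noteq> 0" "degree f \<le> a"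
    and p: "degree_less p (a + degree g)"
  shows "\<exists>u v. degree_less u (degree g) \<and> degree_less v a \<and> p = u * f + v * g"
proof -
  obtain x y where xy: "x * f + y * g = 1"
    using assms(1) unfolding comaximal_def by blast
  define u where "u = (p * x) mod g"
  define v where "v = (p * x) div g * f + p * y"
  have px: "p * x = (p * x) div g * g + u"
    by (simp add: u_def)
  have "p = p * (x * f + y * g)" by (simp add: xy)
  also have "\<dots> = (p * x) * f + p * y * g" by (simp add: algebra_simps)
  also have "\<dots> = u * f + v * g"
    by (subst px) (simp add: v_def algebra_simps)
  finally have pe: "p = u * f + v * g" .
  have u: "degree_less u (degree g)"
    unfolding degree_less_def u_def using degree_mod_less[OF \<open>g \<noteq> 0\<close>] by blast
  have "degree_less (p - u * f) (a + degree g)"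
    using degree_less_diff[OF p degree_less_mult[OF u \<open>degree f \<le> a\<close>]] by (simp add: add.commute)
  then have "degree_less v a"
    using pe \<open>g \<noteq> 0\<close> degree_less_mult_cancel[of v g a] by (simp add: algebra_simps)
  with u pe show ?thesis by blast
qed

lemma comaximal_decomposition_degree_less:
  fixes f g p :: "'a::field poly"
  assumes "comaximal f g" "f \<noteq> 0" "g \<noteq> 0" "degree f \<le> a" "degree g \<le> b"
    and "degree f = a \<or> degree g = b" and "degree_less p (a + b)"
  shows "\<exists>u v. degree_less u b \<and> degree_less v a \<and> p = u * f + v * g"
proof (cases "degree g = b")
  case True
  with assms show ?thesis
    using comaximal_decomposition_exact_degree[of f g a p] by blast
next
  case False
  with assms have "degree f = a" "comaximal g f" "degree_less p (b + degree f)"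
    by (simp_all add: comaximal_commute add.commute)
  then show ?thesis
    using comaximal_decomposition_exact_degree[of g f b p] assms by (auto simp: add.commute)
qed

text \<open>Dehomogenize, solve in one variable with degree bounds, and homogenize back.\<close>

lemma homogeneous_decomposition_of_no_common_zero:
  fixes A B P :: "'a::field poly poly"
  assumes hA: "homogeneous A a" and hB: "homogeneous B b" and "A \<noteq> 0" "B \<noteq> 0"
    and AB: "no_common_zero A B" and hP: "homogeneous_pred P (a + b)"
  shows "\<exists>U V. homogeneous_pred U b \<and> homogeneous_pred V a \<and> P = U * A + V * B"
proof -
  have "dehomogenize A \<noteq> 0" "dehomogenize B \<noteq> 0"
    using dehomogenize_eq_0_iff hA hB \<open>A \<noteq> 0\<close> \<open>B \<noteq> 0\<close> by blast+
  moreover have "degree (dehomogenize A) = a \<or> degree (dehomogenize B) = b"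
    using AB degree_dehomogenize_eq[OF hA] degree_dehomogenize_eq[OF hB]
    by (auto simp: no_common_zero_def)
  ultimately obtain u v where "degree_less u b" "degree_less v a"
    and uv: "dehomogenize P = u * dehomogenize A + v * dehomogenize B"
    using comaximal_decomposition_degree_less AB
      degree_dehomogenize_le[OF hA] degree_dehomogenize_le[OF hB] degree_less_dehomogenize[OF hP]
    unfolding no_common_zero_def by blast
  then obtain U V where hU: "homogeneous_pred U b" "dehomogenize U = u"
    and hV: "homogeneous_pred V a" "dehomogenize V = v"
    using obtain_homogeneous_pred_with_dehomogenize by metis
  have "homogeneous_pred (P - U * A - V * B) (a + b)"
  proof (intro homogeneous_pred_diff hP homogeneous_pred_mult)
    show "homogeneous_pred A (Suc a)" "homogeneous_pred B (Suc b)"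
      using hA hB by simp_all
  qed (use hU hV in simp_all)
  moreover have "dehomogenize (P - U * A - V * B) = 0"
    using uv hU hV by simp
  ultimately have "P - U * A - V * B = 0"
    by (rule homogeneous_pred_dehomogenize_eq_0)
  then have "P = U * A + V * B"
    by (simp add: algebra_simps)
  with hU hV show ?thesis by blast
qed

definition prod_others :: "'a::comm_monoid_mult list \<Rightarrow> nat \<Rightarrow> 'a" where
  "prod_others xs i = prod_list (take i xs @ drop (Suc i) xs)"

lemma prod_others_Cons_0 [simp]: "prod_others (x # xs) 0 = prod_list xs"
  and prod_others_Cons_Suc [simp]: "prod_others (x # xs) (Suc i) = x * prod_others xs i"
  by (simp_all add: prod_others_def)

lemma prod_list_eq_nth_mult_prod_others:
  "i < length xs \<Longrightarrow> prod_list xs = xs ! i * prod_others xs i"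
  unfolding prod_others_def
  by (subst id_take_nth_drop[of i xs]) (simp_all add: mult.left_commute)

lemma sum_prod_others_Cons:
  "(\<Sum>i<length (x # xs). (c # cs) ! i * prod_others (x # xs) i)
     = c * prod_list xs + x * (\<Sum>i<length xs. cs ! i * prod_others xs i)"
  for x :: "'a::comm_semiring_1"
  by (simp add: sum.lessThan_Suc_shift sum_distrib_left mult.left_commute del: sum.lessThan_Suc)

lemma homogeneous_in_cofactor_span:
  fixes Ss :: "'a::field poly poly list"
  assumes "list_all2 homogeneous Ss ns" "0 \<notin> set Ss" "sorted_wrt no_common_zero Ss"
    and "homogeneous_pred P (sum_list ns)"
  shows "\<exists>cs. list_all2 homogeneous_pred cs ns \<and> P = (\<Sum>i<length Ss. cs ! i * prod_others Ss i)"
  using assms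
proof (induction arbitrary: P rule: list_all2_induct)
  case Nil
  then show ?case by simp
next
  case (Cons S Ss n ns)
  have "homogeneous (prod_list Ss) (sum_list ns)" "prod_list Ss \<noteq> 0"
    using Cons by (simp_all add: homogeneous_prod_list prod_list_zero_iff)
  moreover have "no_common_zero S (prod_list Ss)"
    using Cons.prems(2) by (auto intro: no_common_zero_prod_list_right)
  ultimately obtain U V where U: "homogeneous_pred U (sum_list ns)" and V: "homogeneous_pred V n"
    and P: "P = U * S + V * prod_list Ss"
    using homogeneous_decomposition_of_no_common_zero[OF Cons.hyps(1) _ _ _ _, of "prod_list Ss" "sum_list ns" P]
      Cons.prems by (auto simp: add.commute)
  obtain cs where "list_all2 homogeneous_pred cs ns" and "U = (\<Sum>i<length Ss. cs ! i * prod_others Ss i)"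
    using Cons.IH[OF _ _ U] Cons.prems by auto
  moreover from this P have "P = (\<Sum>i<length (S # Ss). (V # cs) ! i * prod_others (S # Ss) i)"
    unfolding sum_prod_others_Cons by (simp add: algebra_simps)
  ultimately show ?case
    using V by (intro exI[of _ "V # cs"]) simp
qed

section \<open>Composition of differential operators\<close>

lemma derivation_0: "is_derivation d \<Longrightarrow> d 0 = 0"
  unfolding is_derivation_def by (metis add.right_neutral add_left_cancel)

lemma funpow_derivation_0: "is_derivation d \<Longrightarrow> (d ^^ p) 0 = 0"
  by (induction p) (simp_all add: derivation_0)

lemma funpow_derivation_add:
  "is_derivation d \<Longrightarrow> (d ^^ p) (x + y) = (d ^^ p) x + (d ^^ p) y"
  by (induction p) (auto simp: is_derivation_def)

definition op_of_poly :: "'a::zero poly poly \<Rightarrow> 'a diffop" where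
  "op_of_poly P = (\<lambda>(i, j). biv_coeff P i j)"

lemma op_of_poly_apply [simp]: "op_of_poly P (i, j) = biv_coeff P i j"
  by (simp add: op_of_poly_def)

lemma op_of_poly_add: "op_of_poly (P + Q) = op_of_poly P + op_of_poly Q"
  by (auto simp: op_of_poly_def)

definition ord_below :: "'a::zero diffop \<Rightarrow> nat \<Rightarrow> bool" where
  "ord_below A t \<longleftrightarrow> (\<forall>i j. t \<le> i + j \<longrightarrow> A (i, j) = 0)"

lemma ord_below_nonzero: "ord_below A t \<Longrightarrow> A (i, j) \<noteq> 0 \<Longrightarrow> i + j < t"
  unfolding ord_below_def by (meson not_le)

lemma finite_op_supp_of_ord_below:
  assumes "ord_below A t"
  shows "finite (op_supp A)"
proof (rule finite_subset)
  show "op_supp A \<subseteq> {..t} \<times> {..t}"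
    using ord_below_nonzero[OF assms] by (fastforce simp: op_supp_def)
qed simp

definition op_comp_summand ::
  "('a::field \<Rightarrow> 'a) \<Rightarrow> ('a \<Rightarrow> 'a) \<Rightarrow> 'a diffop \<Rightarrow> 'a diffop \<Rightarrow> nat \<Rightarrow> nat \<Rightarrow> nat \<Rightarrow> nat \<Rightarrow> nat \<Rightarrow> nat \<Rightarrow> 'a"
where
  "op_comp_summand d1 d2 A B m n i j p q =
     (if i - p \<le> m \<and> j - q \<le> n then
        of_nat (i choose p) * of_nat (j choose q) * A (i, j)
          * (d1 ^^ p) ((d2 ^^ q) (B (m - (i - p), n - (j - q))))
      else 0)"

lemma op_comp_eq_sum_summand:
  "op_comp d1 d2 A B (m, n) = (\<Sum>(i, j)\<in>op_supp A. \<Sum>p\<le>i. \<Sum>q\<le>j. op_comp_summand d1 d2 A B m n i j p q)"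
  by (simp add: op_comp_def op_comp_summand_def)

lemma op_comp_eq_sum_summand_superset:
  assumes "finite S" "op_supp A \<subseteq> S"
  shows "op_comp d1 d2 A B (m, n) = (\<Sum>(i, j)\<in>S. \<Sum>p\<le>i. \<Sum>q\<le>j. op_comp_summand d1 d2 A B m n i j p q)"
  unfolding op_comp_def op_comp_summand_def prod.case
  by (intro sum.mono_neutral_left[OF assms]) (auto simp: op_supp_def cong: if_cong)

lemma op_comp_summand_add_left:
  "op_comp_summand d1 d2 (A + G) B m n i j p q
     = op_comp_summand d1 d2 A B m n i j p q + op_comp_summand d1 d2 G B m n i j p q"
  by (simp add: op_comp_summand_def algebra_simps)

lemma op_comp_summand_add_right:
  "is_derivation d1 \<Longrightarrow> is_derivation d2 \<Longrightarrow> op_comp_summand d1 d2 A (B + C) m n i j p q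
     = op_comp_summand d1 d2 A B m n i j p q + op_comp_summand d1 d2 A C m n i j p q"
  by (simp add: op_comp_summand_def funpow_derivation_add algebra_simps)

lemma op_comp_add_left:
  assumes "finite (op_supp A)" "finite (op_supp G)"
  shows "op_comp d1 d2 (A + G) B = op_comp d1 d2 A B + op_comp d1 d2 G B"
proof
  fix x :: "nat \<times> nat"
  obtain m n where x: "x = (m, n)" by fastforce
  let ?S = "op_supp A \<union> op_supp G"
  have "op_supp (A + G) \<subseteq> ?S"
    by (auto simp: op_supp_def)
  with assms show "op_comp d1 d2 (A + G) B x = (op_comp d1 d2 A B + op_comp d1 d2 G B) x"
    unfolding x by (simp add: op_comp_eq_sum_summand_superset[of ?S] op_comp_summand_add_left
        sum.distrib split_def)
qed

lemma op_comp_add_right: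
  assumes "is_derivation d1" "is_derivation d2"
  shows "op_comp d1 d2 A (B + C) = op_comp d1 d2 A B + op_comp d1 d2 A C"
proof
  fix x :: "nat \<times> nat"
  obtain m n where x: "x = (m, n)" by fastforce
  show "op_comp d1 d2 A (B + C) x = (op_comp d1 d2 A B + op_comp d1 d2 A C) x"
    unfolding x
    by (simp add: op_comp_eq_sum_summand op_comp_summand_add_right[OF assms] sum.distrib split_def)
qed

lemma op_comp_diff_right:
  assumes "is_derivation d1" "is_derivation d2"
  shows "op_comp d1 d2 A B = op_comp d1 d2 A C + op_comp d1 d2 A (B - C)"
  using op_comp_add_right[OF assms, of A C "B - C"] by simp

lemma op_comp_list_Nil [simp]: "op_comp_list d1 d2 [] = op_one"
  and op_comp_list_Cons [simp]: "op_comp_list d1 d2 (F # Fs) = op_comp d1 d2 F (op_comp_list d1 d2 Fs)"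
  by (simp_all add: op_comp_list_def)

text \<open>The \<open>p + q\<close> derivatives falling on a coefficient of \<open>B\<close> lower the order of a summand
  by \<open>p + q\<close>.\<close>

lemma op_comp_summand_eq_0:
  assumes "is_derivation d1" "is_derivation d2" "ord_below A a" "ord_below B b"
    and "a + b \<le> m + n + p + q + 1" "p \<le> i" "q \<le> j"
  shows "op_comp_summand d1 d2 A B m n i j p q = 0"
proof (cases "A (i, j) \<noteq> 0 \<and> i - p \<le> m \<and> j - q \<le> n")
  case True
  then have "b \<le> (m - (i - p)) + (n - (j - q))"
    using ord_below_nonzero[OF assms(3)] assms(5-7) by fastforce
  then have "B (m - (i - p), n - (j - q)) = 0"
    using assms(4) by (simp add: ord_below_def)
  then show ?thesis
    by (simp add: op_comp_summand_def funpow_derivation_0 assms(1,2))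
qed (auto simp: op_comp_summand_def)

lemma ord_below_op_comp:
  assumes "is_derivation d1" "is_derivation d2" "ord_below A a" "ord_below B b" "a + b \<le> Suc t"
  shows "ord_below (op_comp d1 d2 A B) t"
  unfolding ord_below_def op_comp_eq_sum_summand
  using op_comp_summand_eq_0[OF assms(1-4)] assms(5)
  by (auto intro!: sum.neutral)

lemma sum_eq_single:
  assumes "finite S" "x \<in> S" "\<And>y. y \<in> S \<Longrightarrow> y \<noteq> x \<Longrightarrow> g y = 0"
  shows "sum g S = g x"
  using assms by (simp add: sum.remove sum.neutral)

text \<open>Up to the second highest order the composition is just the product of symbols: the terms
  created by moving derivatives to the right are of lower order.\<close>

lemma op_comp_eq_convolution:
  assumes der: "is_derivation d1" "is_derivation d2"
    and A: "ord_below A a" and B: "ord_below B b" and "a + b \<le> m + n + 2"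
  shows "op_comp d1 d2 A B (m, n) = (\<Sum>r\<le>m. \<Sum>l\<le>n. A (r, l) * B (m - r, n - l))"
proof -
  have vanish: "op_comp_summand d1 d2 A B m n i j p q = 0"
    if "p \<le> i" "q \<le> j" "p \<noteq> 0 \<or> q \<noteq> 0" for i j p q
    by (intro op_comp_summand_eq_0[OF der A B]) (use assms(5) that in auto)
  have inner: "(\<Sum>p\<le>i. \<Sum>q\<le>j. op_comp_summand d1 d2 A B m n i j p q)
      = (if i \<le> m \<and> j \<le> n then A (i, j) * B (m - i, n - j) else 0)" for i j
  proof -
    have "(\<Sum>p\<le>i. \<Sum>q\<le>j. op_comp_summand d1 d2 A B m n i j p q)
        = (\<Sum>q\<le>j. op_comp_summand d1 d2 A B m n i j 0 q)"
      by (rule sum_eq_single) (use vanish in auto)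
    also have "\<dots> = op_comp_summand d1 d2 A B m n i j 0 0"
      by (rule sum_eq_single) (use vanish in auto)
    finally show ?thesis
      by (simp add: op_comp_summand_def)
  qed
  have fin: "finite (op_supp A)"
    using finite_op_supp_of_ord_below[OF A] .
  have "op_comp d1 d2 A B (m, n)
      = (\<Sum>(i, j)\<in>op_supp A. if i \<le> m \<and> j \<le> n then A (i, j) * B (m - i, n - j) else 0)"
    unfolding op_comp_eq_sum_summand by (simp add: inner split_def)
  also have "\<dots> = (\<Sum>(i, j)\<in>op_supp A \<union> {..m} \<times> {..n}.
      if i \<le> m \<and> j \<le> n then A (i, j) * B (m - i, n - j) else 0)"
    using fin by (intro sum.mono_neutral_left) (auto simp: op_supp_def)
  also have "\<dots> = (\<Sum>(i, j)\<in>{..m} \<times> {..n}. A (i, j) * B (m - i, n - j))"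
    using fin by (intro sum.mono_neutral_cong_right) (auto simp: op_supp_def split: if_splits)
  finally show ?thesis
    by (simp add: sum.cartesian_product)
qed

section \<open>Top parts of compositions\<close>

text \<open>\<open>has_top_part A t P\<close>: \<open>A\<close> has order less than \<open>t\<close>, and its terms of order \<open>t - 1\<close>
  are those of the form \<open>P\<close> (for \<open>t = 0\<close>: \<open>A = 0\<close> and \<open>P = 0\<close>).\<close>

definition has_top_part :: "'a::zero diffop \<Rightarrow> nat \<Rightarrow> 'a poly poly \<Rightarrow> bool" where
  "has_top_part A t P \<longleftrightarrow> homogeneous_pred P t \<and> ord_below A t
     \<and> (\<forall>i j. Suc (i + j) = t \<longrightarrow> A (i, j) = biv_coeff P i j)"

lemma has_top_part_op_of_poly: "homogeneous_pred P t \<Longrightarrow> has_top_part (op_of_poly P) t P"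
  by (auto simp: has_top_part_def ord_below_def homogeneous_pred_iff)

lemma has_top_part_zero_of_ord_below: "ord_below A t \<Longrightarrow> has_top_part A (Suc t) 0"
  by (simp add: has_top_part_def ord_below_def)

lemma has_top_part_add:
  "has_top_part A t P \<Longrightarrow> has_top_part B t Q \<Longrightarrow> has_top_part (A + B) t (P + Q)"
  by (simp add: has_top_part_def ord_below_def homogeneous_pred_add)

lemma has_top_part_diff:
  "has_top_part A t P \<Longrightarrow> has_top_part B t Q \<Longrightarrow> has_top_part (A - B) t (P - Q)"
  for A B :: "'a::comm_ring diffop"
  by (simp add: has_top_part_def ord_below_def homogeneous_pred_diff)

lemma ord_below_pred_of_has_top_part_0:
  assumes "has_top_part A t 0"
  shows "ord_below A (t - 1)"
  unfolding ord_below_def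
proof (intro allI impI)
  fix i j assume "t - 1 \<le> i + j"
  then have "t \<le> i + j \<or> Suc (i + j) = t" by linarith
  with assms show "A (i, j) = 0"
    by (auto simp: has_top_part_def ord_below_def)
qed

lemma ex_has_top_part:
  fixes A :: "'a::comm_monoid_add diffop"
  assumes "ord_below A t"
  shows "\<exists>P. has_top_part A t P"
proof -
  define P where "P = (\<Sum>i<t. biv_monom (A (i, t - Suc i)) i (t - Suc i))"
  have "biv_coeff P i j = (if Suc (i + j) = t then A (i, j) else 0)" for i j
  proof -
    have "biv_coeff P i j = (\<Sum>k<t. if k = i then (if t - Suc i = j then A (i, j) else 0) else 0)"
      unfolding P_def biv_coeff_sum by (intro sum.cong) auto
    then show ?thesis
      by (auto simp: sum.delta)
  qed
  with assms have "has_top_part A t P"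
    by (auto simp: has_top_part_def homogeneous_pred_def)
  then show ?thesis ..
qed

lemma has_top_part_op_comp:
  assumes der: "is_derivation d1" "is_derivation d2"
    and A: "has_top_part A a P" and B: "has_top_part B b Q" and t: "a + b = Suc t"
  shows "has_top_part (op_comp d1 d2 A B) t (P * Q)"
proof -
  have oA: "ord_below A a" and oB: "ord_below B b"
    and hP: "homogeneous_pred P a" and hQ: "homogeneous_pred Q b"
    using A B by (simp_all add: has_top_part_def)
  have "op_comp d1 d2 A B (m, k) = biv_coeff (P * Q) m k" if mk: "Suc (m + k) = t" for m k
  proof -
    have "A (r, l) * B (m - r, k - l) = biv_coeff P r l * biv_coeff Q (m - r) (k - l)"
      if "r \<le> m" "l \<le> k" for r l
    proof (cases "Suc (r + l)" a rule: linorder_cases)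
      case less
      then have "B (m - r, k - l) = 0"
        using oB mk t that by (simp add: ord_below_def)
      with less hP show ?thesis
        by (simp add: homogeneous_pred_iff)
    next
      case equal
      then have "Suc ((m - r) + (k - l)) = b"
        using mk t that by linarith
      with equal A B show ?thesis
        by (simp add: has_top_part_def)
    next
      case greater
      with oA hP show ?thesis
        by (simp add: ord_below_def homogeneous_pred_iff)
    qed
    then show ?thesis
      using op_comp_eq_convolution[OF der oA oB] mk t by (simp add: biv_coeff_mult)
  qed
  moreover have "ord_below (op_comp d1 d2 A B) t"
    using ord_below_op_comp[OF der oA oB] t by simp
  moreover have "homogeneous_pred (P * Q) t"
    using homogeneous_pred_mult[OF hP hQ t] .
  ultimately show ?thesis
    by (simp add: has_top_part_def)
qed

text \<open>Perturbing the factors \<open>S\<^sub>i\<close> by forms \<open>c\<^sub>i\<close> of one degree less changes the composite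
  in order \<open>d - 1\<close> by \<open>\<Sum> c\<^sub>i \<Prod>\<^sub>j\<^sub>\<noteq>\<^sub>i S\<^sub>j\<close>, the derivative terms cancelling out.\<close>

lemma op_comp_list_top_parts:
  assumes der: "is_derivation d1" "is_derivation d2"
    and "list_all2 homogeneous Ss ns" and "list_all2 homogeneous_pred cs ns"
  shows "has_top_part (op_comp_list d1 d2 (map op_of_poly Ss)) (Suc (sum_list ns)) (prod_list Ss)
    \<and> has_top_part (op_comp_list d1 d2 (map2 (\<lambda>S c. op_of_poly (S + c)) Ss cs)
                     - op_comp_list d1 d2 (map op_of_poly Ss))
        (sum_list ns) (\<Sum>i<length Ss. cs ! i * prod_others Ss i)"
  using assms(3,4)
proof (induction Ss ns arbitrary: cs rule: list_all2_induct)
  case Nil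
  then show ?case
    by (auto simp: has_top_part_def ord_below_def op_one_def biv_coeff_1 homogeneous_1)
next
  case (Cons S Ss n ns)
  then obtain c cs' where cs: "cs = c # cs'" "homogeneous_pred c n" "list_all2 homogeneous_pred cs' ns"
    by (cases cs) auto
  define X0 where "X0 = op_comp_list d1 d2 (map op_of_poly Ss)"
  define X where "X = op_comp_list d1 d2 (map2 (\<lambda>S c. op_of_poly (S + c)) Ss cs')"
  define Q where "Q = (\<Sum>i<length Ss. cs' ! i * prod_others Ss i)"
  have X0: "has_top_part X0 (Suc (sum_list ns)) (prod_list Ss)"
    and Y: "has_top_part (X - X0) (sum_list ns) Q"
    using Cons.IH[OF cs(3)] unfolding X0_def X_def Q_def by blast+
  have "has_top_part (X0 + (X - X0)) (Suc (sum_list ns)) (prod_list Ss + 0)"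
    using Y by (intro has_top_part_add X0 has_top_part_zero_of_ord_below) (simp add: has_top_part_def)
  then have X: "has_top_part X (Suc (sum_list ns)) (prod_list Ss)"
    by simp
  have S: "has_top_part (op_of_poly S) (Suc n) S" and c: "has_top_part (op_of_poly c) n c"
    using Cons.hyps(1) cs(2) by (simp_all add: has_top_part_op_of_poly)
  have fin: "finite (op_supp (op_of_poly S))" "finite (op_supp (op_of_poly c))"
    using S c by (auto simp: has_top_part_def intro: finite_op_supp_of_ord_below)
  have "op_comp d1 d2 (op_of_poly (S + c)) X - op_comp d1 d2 (op_of_poly S) X0
      = op_comp d1 d2 (op_of_poly c) X + op_comp d1 d2 (op_of_poly S) (X - X0)"
    using op_comp_diff_right[OF der, of "op_of_poly S" X X0]
    by (simp add: op_of_poly_add op_comp_add_left[OF fin])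
  moreover have "has_top_part (op_comp d1 d2 (op_of_poly c) X + op_comp d1 d2 (op_of_poly S) (X - X0))
      (n + sum_list ns) (c * prod_list Ss + S * Q)"
    by (intro has_top_part_add has_top_part_op_comp[OF der S Y] has_top_part_op_comp[OF der c X]) simp_all
  moreover have "has_top_part (op_comp d1 d2 (op_of_poly S) X0) (Suc (n + sum_list ns)) (S * prod_list Ss)"
    by (rule has_top_part_op_comp[OF der S X0]) simp
  ultimately show ?case
    unfolding cs(1) sum_prod_others_Cons
    by (simp only: list.map zip_Cons_Cons prod.case op_comp_list_Cons sum_list.Cons prod_list.Cons
        X0_def[symmetric] X_def[symmetric] Q_def[symmetric])
qed

section \<open>Symbol and order\<close>

lemma op_sym_coeff:
  assumes "op_valid A" "op_supp A \<noteq> {}" "Max ((\<lambda>(i, j). i + j) ` op_supp A) = n"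
  shows "biv_coeff (op_sym A) i j = (if i + j = n then A (i, j) else 0)"
proof -
  let ?T = "{(i, j). (i, j) \<in> op_supp A \<and> i + j = n}"
  have fin: "finite ?T"
    using assms(1) unfolding op_valid_def by (rule finite_subset[rotated]) auto
  have "biv_coeff (op_sym A) i j = (\<Sum>x\<in>?T. biv_coeff (case x of (k, l) \<Rightarrow> biv_monom (A (k, l)) k l) i j)"
    using assms(2,3) by (simp add: op_sym_def Let_def biv_coeff_sum)
  also have "\<dots> = (\<Sum>x\<in>?T. if x = (i, j) then A (i, j) else 0)"
    by (intro sum.cong refl) (auto split: if_splits)
  also have "\<dots> = (if i + j = n then A (i, j) else 0)"
    using fin by (simp add: sum.delta' op_supp_def)
  finally show ?thesis .
qed

lemma has_top_part_of_op_ord: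
  assumes "op_valid L" "op_ord L = ereal (real d)"
  shows "has_top_part L (Suc d) (op_sym L)" "op_sym L \<noteq> 0"
proof -
  have ne: "op_supp L \<noteq> {}" and mx: "Max ((\<lambda>(i, j). i + j) ` op_supp L) = d"
    using assms(2) by (auto simp: op_ord_def split: if_splits)
  have fin: "finite ((\<lambda>(i, j). i + j) ` op_supp L)"
    using assms(1) by (simp add: op_valid_def)
  have sym: "biv_coeff (op_sym L) i j = (if i + j = d then L (i, j) else 0)" for i j
    using op_sym_coeff[OF assms(1) ne mx] .
  have le: "i + j \<le> d" if "L (i, j) \<noteq> 0" for i j
    using Max_ge[OF fin, of "i + j"] that mx by (force simp: op_supp_def)
  have "ord_below L (Suc d)"
    unfolding ord_below_def
  proof (intro allI impI)
    fix i j assume "Suc d \<le> i + j"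
    then show "L (i, j) = 0"
      by (cases "L (i, j) = 0") (auto dest: le)
  qed
  then show "has_top_part L (Suc d) (op_sym L)"
    by (auto simp: has_top_part_def homogeneous_def sym)
  have "d \<in> (\<lambda>(i, j). i + j) ` op_supp L"
    using Max_in[OF fin] ne mx by auto
  then obtain i j where "(i, j) \<in> op_supp L" "i + j = d"
    by auto
  then show "op_sym L \<noteq> 0"
    using sym[of i j] by (auto simp: op_supp_def)
qed

lemma op_sym_of_has_top_part:
  assumes A: "has_top_part A (Suc n) S" and "S \<noteq> 0"
  shows "op_sym A = S" "op_valid A"
proof -
  have fin: "finite (op_supp A)"
    using A by (auto simp: has_top_part_def intro: finite_op_supp_of_ord_below)
  then show "op_valid A"
    by (simp add: op_valid_def)
  have le: "i + j \<le> n" if "(i, j) \<in> op_supp A" for i j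
    using A that by (auto simp: has_top_part_def op_supp_def dest: ord_below_nonzero)
  obtain i0 j0 where "biv_coeff S i0 j0 \<noteq> 0"
    using \<open>S \<noteq> 0\<close> by (rule biv_poly_nonzero_coeff)
  with A have "(i0, j0) \<in> op_supp A" "i0 + j0 = n"
    by (auto simp: has_top_part_def homogeneous_def op_supp_def)
  moreover have "Max ((\<lambda>(i, j). i + j) ` op_supp A) = n"
    using fin le calculation by (intro Max_eqI) (auto intro: rev_image_eqI)
  ultimately have "biv_coeff (op_sym A) i j = (if i + j = n then A (i, j) else 0)" for i j
    by (intro op_sym_coeff[OF \<open>op_valid A\<close>]) auto
  with A show "op_sym A = S"
    by (intro biv_poly_eqI) (auto simp: has_top_part_def homogeneous_iff)
qed

lemma op_ord_le_of_ord_below: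
  assumes "ord_below R (d - 1)"
  shows "op_ord R \<le> ereal (real d - 2)"
proof (cases "op_supp R = {}")
  case False
  have fin: "finite ((\<lambda>(i, j). i + j) ` op_supp R)"
    using finite_op_supp_of_ord_below[OF assms] by simp
  obtain i j where ij: "(i, j) \<in> op_supp R" "Max ((\<lambda>(i, j). i + j) ` op_supp R) = i + j"
    using Max_in[OF fin] False by auto
  then have "i + j + 2 \<le> d"
    using ord_below_nonzero[OF assms, of i j] by (simp add: op_supp_def)
  with False ij show ?thesis
    by (simp add: op_ord_def)
qed (simp add: op_ord_def)

lemma op_sym_op_of_poly_add:
  assumes "homogeneous S n" "S \<noteq> 0" "homogeneous_pred c n"
  shows "op_sym (op_of_poly (S + c)) = S" "op_valid (op_of_poly (S + c))"
proof -
  have "has_top_part (op_of_poly S) (Suc n) S" "has_top_part (op_of_poly c) n c"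
    using assms by (simp_all add: has_top_part_op_of_poly)
  then have "has_top_part (op_of_poly S + op_of_poly c) (Suc n) (S + 0)"
    by (intro has_top_part_add has_top_part_zero_of_ord_below) (simp_all add: has_top_part_def)
  then show "op_sym (op_of_poly (S + c)) = S" "op_valid (op_of_poly (S + c))"
    using op_sym_of_has_top_part \<open>S \<noteq> 0\<close> by (simp_all add: op_of_poly_add)
qed

lemma has_factorization_perturbed:
  assumes "list_all2 homogeneous Ss ns" "0 \<notin> set Ss" "list_all2 homogeneous_pred cs ns"
  shows "has_factorization d1 d2 (op_comp_list d1 d2 (map2 (\<lambda>S c. op_of_poly (S + c)) Ss cs)) Ss"
proof -
  define Fs where "Fs = map2 (\<lambda>S c. op_of_poly (S + c)) Ss cs"
  have len: "length Fs = length Ss"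
    using assms(1,3) by (simp add: Fs_def list_all2_lengthD)
  have factor: "op_sym (Fs ! i) = Ss ! i \<and> op_valid (Fs ! i)" if "i < length Ss" for i
  proof -
    have "Ss ! i \<noteq> 0"
      using assms(2) nth_mem[OF that] by force
    then show ?thesis
      using op_sym_op_of_poly_add[of "Ss ! i" "ns ! i" "cs ! i"] assms(1,3) that
      by (simp add: Fs_def list_all2_conv_all_nth)
  qed
  then have "\<forall>F\<in>set Fs. op_valid F"
    using len by (auto simp: in_set_conv_nth)
  with len factor show ?thesis
    unfolding has_factorization_def Fs_def[symmetric] by blast
qed

section \<open>Common obstacles\<close>

text \<open>Solve for the perturbations \<open>c\<^sub>i\<close> of the factors that fix the order \<open>d - 1\<close> part of
  \<open>L\<close> as well; the remainder then has order at most \<open>d - 2\<close>.\<close>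

lemma factorization_with_remainder_of_order_below:
  fixes Ss :: "'a::field poly poly list"
  assumes der: "is_derivation d1" "is_derivation d2"
    and L: "has_top_part L (Suc d) (prod_list Ss)"
    and Ss: "list_all2 homogeneous Ss ns" "0 \<notin> set Ss" "sorted_wrt no_common_zero Ss"
    and d: "sum_list ns = d"
  shows "\<exists>R. op_valid R \<and> ord_below R (d - 1) \<and> has_factorization d1 d2 (L - R) Ss"
proof -
  define T where "T = op_comp_list d1 d2 (map op_of_poly Ss)"
  have "has_top_part T (Suc d) (prod_list Ss)"
    using op_comp_list_top_parts[OF der Ss(1), of "replicate (length Ss) 0"] Ss(1) d
    by (simp add: T_def list_all2_conv_all_nth)
  with L have "ord_below (L - T) d"
    using has_top_part_diff ord_below_pred_of_has_top_part_0 by fastforce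
  then obtain P where P: "has_top_part (L - T) d P"
    using ex_has_top_part by blast
  then obtain cs where cs: "list_all2 homogeneous_pred cs ns"
    and P_eq: "P = (\<Sum>i<length Ss. cs ! i * prod_others Ss i)"
    using homogeneous_in_cofactor_span[OF Ss, of P] P d unfolding has_top_part_def by blast
  define Fs where "Fs = map2 (\<lambda>S c. op_of_poly (S + c)) Ss cs"
  have "has_top_part (op_comp_list d1 d2 Fs - T) d P"
    using op_comp_list_top_parts[OF der Ss(1) cs] d by (simp add: T_def Fs_def P_eq)
  with P have "has_top_part (L - op_comp_list d1 d2 Fs) d 0"
    using has_top_part_diff[of "L - T" d P "op_comp_list d1 d2 Fs - T" P] by simp
  then have "ord_below (L - op_comp_list d1 d2 Fs) (d - 1)"
    by (rule ord_below_pred_of_has_top_part_0)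
  moreover have "has_factorization d1 d2 (op_comp_list d1 d2 Fs) Ss"
    unfolding Fs_def by (rule has_factorization_perturbed[OF Ss(1,2) cs])
  ultimately show ?thesis
    by (intro exI[of _ "L - op_comp_list d1 d2 Fs"])
      (simp add: op_valid_def finite_op_supp_of_ord_below)
qed

lemma obtain_factor_degrees:
  assumes "\<forall>S\<in>set Ss. \<exists>m. homogeneous S m" "homogeneous (prod_list Ss) d" "prod_list Ss \<noteq> 0"
  obtains ns where "list_all2 homogeneous Ss ns" "sum_list ns = d"
proof -
  define ns where "ns = map (\<lambda>S. SOME m. homogeneous S m) Ss"
  have ns: "list_all2 homogeneous Ss ns"
    using assms(1) by (auto simp: ns_def list_all2_map2 list_all2_same intro: someI_ex)
  then have "sum_list ns = d"
    using homogeneous_prod_list homogeneous_degree_unique assms(2,3) by blast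
  with ns that show thesis by blast
qed

lemma sorted_wrt_no_common_zero_of_coprime:
  fixes Ss :: "'a::field poly poly list"
  assumes "0 \<notin> set Ss" "\<forall>S\<in>set Ss. \<exists>m. homogeneous S m"
    and "\<forall>i<length Ss. \<forall>j<length Ss. i \<noteq> j \<longrightarrow> coprime (Ss ! i) (Ss ! j)"
  shows "sorted_wrt no_common_zero Ss"
  unfolding sorted_wrt_iff_nth_less
proof (intro allI impI)
  fix i j assume ij: "i < j" "j < length Ss"
  then have mem: "Ss ! i \<in> set Ss" "Ss ! j \<in> set Ss" by auto
  then obtain a b where "homogeneous (Ss ! i) a" "homogeneous (Ss ! j) b"
    using assms(2) by blast
  moreover have "Ss ! i \<noteq> 0" "Ss ! j \<noteq> 0"
    using mem assms(1) by force+
  ultimately show "no_common_zero (Ss ! i) (Ss ! j)"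
    using assms(3) ij by (intro coprime_imp_no_common_zero) auto
qed

lemma prod_list_div_nth:
  fixes xs :: "'a::idom_divide list"
  assumes "0 \<notin> set xs" "i < length xs"
  shows "prod_list xs div xs ! i = prod_others xs i"
  using prod_list_eq_nth_mult_prod_others[OF assms(2)] nth_mem[OF assms(2)] assms(1)
  by (metis nonzero_mult_div_cancel_left)

theorem mainTheorem10:
  fixes d1 d2 :: "'a::field \<Rightarrow> 'a"
    and L :: "'a diffop"
    and d :: nat
    and Ss :: "'a poly poly list"
  assumes "is_derivation d1" and "is_derivation d2"
    and "\<forall>a. d1 (d2 a) = d2 (d1 a)"
    and "op_valid L"
    and "op_ord L = ereal (real d)"
    and "Ss \<noteq> []"
    and "op_sym L = prod_list Ss"
    and "\<forall>S\<in>set Ss. \<exists>m. homogeneous S m"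
    and "\<forall>i<length Ss. \<forall>j<length Ss. i \<noteq> j \<longrightarrow> coprime (Ss ! i) (Ss ! j)"
  shows "(\<forall>P m. Suc m = d \<and> homogeneous P m \<longrightarrow>
            P \<in> gen_ideal (map (\<lambda>S. op_sym L div S) Ss))
       \<and> (\<forall>R. common_obstacle d1 d2 L Ss R \<longrightarrow> op_ord R \<le> ereal (real d - 2))"
proof -
  have top: "has_top_part L (Suc d) (prod_list Ss)" and "prod_list Ss \<noteq> 0"
    using has_top_part_of_op_ord[OF assms(4,5)] assms(7) by simp_all
  then have nz: "0 \<notin> set Ss" and "homogeneous (prod_list Ss) d"
    by (simp_all add: prod_list_zero_iff has_top_part_def)
  then obtain ns where ns: "list_all2 homogeneous Ss ns" "sum_list ns = d"
    using obtain_factor_degrees assms(8) \<open>prod_list Ss \<noteq> 0\<close> by blast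
  have nzc: "sorted_wrt no_common_zero Ss"
    using sorted_wrt_no_common_zero_of_coprime[OF nz assms(8,9)] .
  show ?thesis
  proof (intro conjI allI impI)
    fix P :: "'a poly poly" and m assume "Suc m = d \<and> homogeneous P m"
    then have "homogeneous_pred P (sum_list ns)"
      using ns(2) by (metis homogeneous_pred_Suc)
    then obtain cs where "P = (\<Sum>i<length Ss. cs ! i * prod_others Ss i)"
      using homogeneous_in_cofactor_span[OF ns(1) nz nzc] by blast
    then show "P \<in> gen_ideal (map (\<lambda>S. op_sym L div S) Ss)"
      unfolding gen_ideal_def assms(7) by (auto simp: prod_list_div_nth[OF nz])
  next
    fix R assume "common_obstacle d1 d2 L Ss R"
    moreover obtain R' where "op_valid R'" "ord_below R' (d - 1)" "has_factorization d1 d2 (L - R') Ss"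
      using factorization_with_remainder_of_order_below[OF assms(1,2) top ns(1) nz nzc ns(2)] by blast
    ultimately have "op_ord R \<le> op_ord R'"
      unfolding common_obstacle_def by blast
    also have "\<dots> \<le> ereal (real d - 2)"
      using \<open>ord_below R' (d - 1)\<close> by (rule op_ord_le_of_ord_below)
    finally show "op_ord R \<le> ereal (real d - 2)" .
  qed
qed

end
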